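(* For every $m\geqslant1$ and $n\geqslant1$, $$\mathcal{F}_m(n)=\prod_{p^\alpha\| n}\left(f_{m-1}(\alpha)-f_{m-1}(\alpha-1)\right),$$ $|\mathcal{F}_m(n)|\leqslant1$, and if $\mathcal{F}_m(n)\neq0$ then every prime $p$ dividing $n$ divides $n$ to exponent at least $2\uparrow\uparrow m$.
   Context: $H(n)$ is the height of the factorization tree of $n\geqslant1$: $H(1)=0$ and, for $n=p_1^{\alpha_1}\cdots p_k^{\alpha_k}>1$ with distinct primes $p_i$, $H(n)=1+\max_i H(\alpha_i)$. For $m\geqslant0$ and $n\geqslant1$, $f_m(n)=1$ if $H(n)\leqslant m$ and $0$ otherwise; in addition, by convention $f_m(0)=1$ for all $m\geqslant 0$ (so $f_0(\alpha)=1$ iff $\alpha\in\{0,1\}$). $\mathcal{F}_m$ is defined by $f_m(n)=\sum_{d\mid n}\mathcal{F}_m(d)$ for all $n\geqslant1$. Tetration: $a\uparrow\uparrow0=1$, $a\uparrow\uparrow b=a^{a\uparrow\uparrow(b-1)}$. The product is over prime powers exactly dividing $n$ (empty product $=1$). *)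

theory Defs
  imports "HOL-Computational_Algebra.Primes"
begin

lemma multiplicity_lt_self:
  assumes "p \<in> prime_factors n" "n > 1"
  shows "multiplicity p n < n"
proof -
  have p: "prime p" using assms(1) by auto
  have "p ^ multiplicity p n dvd n" by (rule multiplicity_dvd)
  hence "p ^ multiplicity p n \<le> n" using assms(2) by (intro dvd_imp_le) auto
  moreover have "multiplicity p n < 2 ^ multiplicity p n" by (rule less_exp)
  moreover have "2 ^ multiplicity p n \<le> p ^ multiplicity p n"
    using prime_ge_2_nat[OF p] by (intro power_mono) auto
  ultimately show ?thesis by linarith
qed

text \<open>Height of the factorization tree: H(1) = 0, H(n) = 1 + max_i H(alpha_i).
  The value at 0 is irrelevant (set to 0).\<close>
function H :: "nat \<Rightarrow> nat" where
  "H n = (if n \<le> 1 then 0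
          else 1 + Max ((\<lambda>p. H (multiplicity p n)) ` prime_factors n))"
  by auto
termination
  by (relation "measure id") (auto intro: multiplicity_lt_self)

declare H.simps[simp del]

definition fm :: "nat \<Rightarrow> nat \<Rightarrow> int" where
  "fm m n = (if n = 0 then 1 else if H n \<le> m then 1 else 0)"

text \<open>F_m is the unique function with f_m(n) = sum over d | n of F_m(d), n >= 1;
  written as the recursion solving that identity for F_m(n).\<close>
function Fm :: "nat \<Rightarrow> nat \<Rightarrow> int" where
  "Fm m n = (if n = 0 then 0
             else fm m n - (\<Sum>d\<in>{d. d dvd n \<and> d < n}. Fm m d))"
  by auto
termination
  by (relation "measure (\<lambda>(m, n). n)") auto

declare Fm.simps[simp del]

lemma Fm_defining_identity:
  assumes "n \<ge> 1"
  shows "fm m n = (\<Sum>d | d dvd n. Fm m d)"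
proof -
  have fin: "finite {d. d dvd n \<and> d < n}" by (rule finite_subset[of _ "{..<n}"]) auto
  have eq: "{d. d dvd n} = insert n {d. d dvd n \<and> d < n}"
    using assms by (auto dest: dvd_imp_le)
  have "(\<Sum>d | d dvd n. Fm m d) = Fm m n + (\<Sum>d\<in>{d. d dvd n \<and> d < n}. Fm m d)"
    unfolding eq using fin by (subst sum.insert) auto
  also have "\<dots> = fm m n" using assms by (subst Fm.simps[of m n]) simp
  finally show ?thesis by simp
qed

fun tetr :: "nat \<Rightarrow> nat \<Rightarrow> nat" where
  "tetr a 0 = 1"
| "tetr a (Suc b) = a ^ tetr a b"

end

theory Submission
  imports Defs "HOL-Library.FuncSet"
begin

text \<open>Since H(n) <= m iff every exponent of n has height at most m - 1, f_m is multiplicative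
  with value f_(m-1)(alpha) at p^alpha. Moebius inversion of a multiplicative function with
  prime-power values g(alpha), where g(0) = 1, gives the multiplicative function with local
  factors g(alpha) - g(alpha - 1), because the divisor sum telescopes at each prime. For
  g = f_(m-1) these factors are differences of 0/1 values, and a factor vanishes as soon as
  alpha < tetr 2 m: every positive number below tetr 2 (j + 1) has all its exponents below
  tetr 2 j, hence height at most j.\<close>

lemma multiplicity_prod_prime_factors_powers:
  fixes n :: nat
  assumes "prime p"
  shows "multiplicity p (\<Prod>q\<in>prime_factors n. q ^ e q) = (if p \<in> prime_factors n then e p else 0)"
  by (rule multiplicity_prod_prime_powers) (use assms in auto)

lemma bij_betw_exponents_divisors:
  fixes n :: nat
  assumes "n > 0"
  shows "bij_betw (\<lambda>e. \<Prod>p\<in>prime_factors n. p ^ e p)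
           (PiE (prime_factors n) (\<lambda>p. {..multiplicity p n})) {d. d dvd n}"
proof (rule bij_betw_byWitness[where f' = "\<lambda>d. restrict (\<lambda>p. multiplicity p d) (prime_factors n)"])
  let ?P = "prime_factors n"
  show "\<forall>e\<in>PiE ?P (\<lambda>p. {..multiplicity p n}).
          restrict (\<lambda>p. multiplicity p (\<Prod>q\<in>?P. q ^ e q)) ?P = e"
    by (auto simp: multiplicity_prod_prime_factors_powers PiE_def extensional_def fun_eq_iff
        in_prime_factors_iff)
  show "\<forall>d\<in>{d. d dvd n}. (\<Prod>p\<in>?P. p ^ restrict (\<lambda>p. multiplicity p d) ?P p) = d"
  proof
    fix d assume "d \<in> {d. d dvd n}"
    then have "d dvd n" and "d > 0" using assms by (auto intro: Nat.gr0I)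
    then have "prime_factors d \<subseteq> ?P" using assms by (intro dvd_prime_factors) auto
    then have "(\<Prod>p\<in>?P. p ^ multiplicity p d) = (\<Prod>p\<in>prime_factors d. p ^ multiplicity p d)"
      by (intro prod.mono_neutral_right)
         (auto simp: not_dvd_imp_multiplicity_0 in_prime_factors_iff)
    also have "\<dots> = d" using prime_factorization_nat[OF \<open>d > 0\<close>] by simp
    finally show "(\<Prod>p\<in>?P. p ^ restrict (\<lambda>p. multiplicity p d) ?P p) = d" by simp
  qed
  show "(\<lambda>e. \<Prod>p\<in>?P. p ^ e p) ` PiE ?P (\<lambda>p. {..multiplicity p n}) \<subseteq> {d. d dvd n}"
  proof safe
    fix e assume e: "e \<in> PiE ?P (\<lambda>p. {..multiplicity p n})"
    have "(\<Prod>p\<in>?P. p ^ e p) \<noteq> 0" by (auto simp: prime_factors_dvd)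
    then show "(\<Prod>p\<in>?P. p ^ e p) dvd n"
      by (rule multiplicity_le_imp_dvd)
         (use e in \<open>auto simp: multiplicity_prod_prime_factors_powers\<close>)
  qed
  show "(\<lambda>d. restrict (\<lambda>p. multiplicity p d) ?P) ` {d. d dvd n}
          \<subseteq> PiE ?P (\<lambda>p. {..multiplicity p n})"
    using assms by (auto intro!: dvd_imp_multiplicity_le)
qed

lemma sum_divisors_prod_multiplicity:
  fixes n :: nat and \<psi> :: "nat \<Rightarrow> nat \<Rightarrow> 'a :: comm_semiring_1"
  assumes "n > 0"
  shows "(\<Sum>d | d dvd n. \<Prod>p\<in>prime_factors n. \<psi> p (multiplicity p d))
       = (\<Prod>p\<in>prime_factors n. \<Sum>k\<le>multiplicity p n. \<psi> p k)"
proof -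
  let ?P = "prime_factors n" and ?E = "PiE (prime_factors n) (\<lambda>p. {..multiplicity p n})"
  have "(\<Prod>p\<in>?P. \<Sum>k\<le>multiplicity p n. \<psi> p k) = (\<Sum>e\<in>?E. \<Prod>p\<in>?P. \<psi> p (e p))"
    by (rule prod_sum_PiE) auto
  also have "\<dots> = (\<Sum>e\<in>?E. \<Prod>p\<in>?P. \<psi> p (multiplicity p (\<Prod>q\<in>?P. q ^ e q)))"
    by (intro sum.cong prod.cong refl)
       (auto simp: multiplicity_prod_prime_factors_powers in_prime_factors_iff)
  also have "\<dots> = (\<Sum>d | d dvd n. \<Prod>p\<in>?P. \<psi> p (multiplicity p d))"
    by (rule sum.reindex_bij_betw[OF bij_betw_exponents_divisors[OF assms]])
  finally show ?thesis by simp
qed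

lemma sum_divisors_prod_diff:
  fixes n :: nat and g :: "nat \<Rightarrow> 'a :: comm_ring_1"
  assumes "n > 0" and "g 0 = 1"
  shows "(\<Sum>d | d dvd n. \<Prod>p\<in>prime_factors d. g (multiplicity p d) - g (multiplicity p d - 1))
       = (\<Prod>p\<in>prime_factors n. g (multiplicity p n))"
proof -
  define \<delta> where "\<delta> k = (if k = 0 then 1 else g k - g (k - 1))" for k
  have local_factors:
    "(\<Prod>p\<in>prime_factors d. g (multiplicity p d) - g (multiplicity p d - 1))
       = (\<Prod>p\<in>prime_factors n. \<delta> (multiplicity p d))" if "d dvd n" for d
  proof -
    have "d > 0"
      using that assms(1) by (auto intro: Nat.gr0I)
    have "prime_factors d \<subseteq> prime_factors n"
      using that assms(1) by (intro dvd_prime_factors) auto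
    have "(\<Prod>p\<in>prime_factors d. g (multiplicity p d) - g (multiplicity p d - 1))
        = (\<Prod>p\<in>prime_factors d. \<delta> (multiplicity p d))"
      using \<open>d > 0\<close> by (intro prod.cong) (auto simp: \<delta>_def prime_factors_multiplicity)
    also have "\<dots> = (\<Prod>p\<in>prime_factors n. \<delta> (multiplicity p d))"
      using \<open>d > 0\<close> \<open>prime_factors d \<subseteq> prime_factors n\<close>
      by (intro prod.mono_neutral_left)
         (auto simp: \<delta>_def not_dvd_imp_multiplicity_0 in_prime_factors_iff)
    finally show ?thesis .
  qed
  have telescope: "(\<Sum>k\<le>a. \<delta> k) = g a" for a
    by (induction a) (auto simp: \<delta>_def assms(2))
  have "(\<Sum>d | d dvd n. \<Prod>p\<in>prime_factors d. g (multiplicity p d) - g (multiplicity p d - 1))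
      = (\<Sum>d | d dvd n. \<Prod>p\<in>prime_factors n. \<delta> (multiplicity p d))"
    using local_factors by (intro sum.cong) auto
  also have "\<dots> = (\<Prod>p\<in>prime_factors n. \<Sum>k\<le>multiplicity p n. \<delta> k)"
    by (rule sum_divisors_prod_multiplicity[OF assms(1)])
  finally show ?thesis by (simp add: telescope)
qed

lemma Fm_eqI:
  fixes G :: "nat \<Rightarrow> int"
  assumes "\<And>k. k > 0 \<Longrightarrow> (\<Sum>d | d dvd k. G d) = fm m k" and "n > 0"
  shows "Fm m n = G n"
  using assms(2)
proof (induction n rule: less_induct)
  case (less n)
  let ?D = "{d. d dvd n \<and> d < n}"
  have divisors: "{d. d dvd n} = insert n ?D" and "finite ?D"
    using less.prems by (auto dest: dvd_imp_le intro: finite_subset[of _ "{..<n}"])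
  have "(\<Sum>d\<in>?D. Fm m d) = (\<Sum>d\<in>?D. G d)"
    using less.prems by (intro sum.cong refl less.IH) (auto intro: Nat.gr0I)
  moreover have "fm m n = Fm m n + (\<Sum>d\<in>?D. Fm m d)"
    using Fm_defining_identity[of n m] less.prems \<open>finite ?D\<close> by (simp add: divisors)
  moreover have "fm m n = G n + (\<Sum>d\<in>?D. G d)"
    using assms(1)[OF less.prems] \<open>finite ?D\<close> by (simp add: divisors)
  ultimately show ?case by simp
qed

lemma prod_of_bool:
  "finite A \<Longrightarrow> (\<Prod>x\<in>A. of_bool (P x) :: 'a :: comm_semiring_1) = of_bool (\<forall>x\<in>A. P x)"
  by (induction A rule: finite_induct) auto

lemma H_le_Suc_iff:
  assumes "n > 0"
  shows "H n \<le> Suc j \<longleftrightarrow> (\<forall>p\<in>prime_factors n. H (multiplicity p n) \<le> j)"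
proof (cases "n = 1")
  case True
  then show ?thesis by (simp add: H.simps)
next
  case False
  then have "prime_factors n \<noteq> {}"
    using assms by (metis prime_factorization_nat prod.empty)
  moreover have "H n = 1 + Max ((\<lambda>p. H (multiplicity p n)) ` prime_factors n)"
    using False assms by (subst H.simps) simp
  ultimately show ?thesis by simp
qed

lemma two_pow_multiplicity_le:
  fixes n :: nat
  assumes "n > 0" and "prime p"
  shows "2 ^ multiplicity p n \<le> n"
proof -
  have "(2::nat) ^ multiplicity p n \<le> p ^ multiplicity p n"
    using prime_ge_2_nat[OF assms(2)] by (intro power_mono) auto
  also have "\<dots> \<le> n"
    using assms(1) by (intro dvd_imp_le multiplicity_dvd)
  finally show ?thesis .
qed

lemma H_le_if_less_tetr:
  assumes "0 < k" and "k < tetr 2 (Suc j)"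
  shows "H k \<le> j"
  using assms
proof (induction j arbitrary: k)
  case 0
  then show ?case by (simp add: H.simps)
next
  case (Suc j)
  have "H (multiplicity p k) \<le> j" if "p \<in> prime_factors k" for p
  proof (rule Suc.IH)
    show "0 < multiplicity p k"
      using that Suc.prems by (simp add: prime_factors_multiplicity)
    have "2 ^ multiplicity p k \<le> k"
      using that Suc.prems by (intro two_pow_multiplicity_le) auto
    also have "k < 2 ^ tetr 2 (Suc j)"
      using Suc.prems by simp
    finally show "multiplicity p k < tetr 2 (Suc j)" by simp
  qed
  then show ?case
    using H_le_Suc_iff[OF Suc.prems(1)] by blast
qed

lemma fm_eq_1_if_less_tetr: "\<alpha> < tetr 2 (Suc j) \<Longrightarrow> fm j \<alpha> = 1"
  by (auto simp: fm_def H_le_if_less_tetr)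

lemma fm_Suc_eq_prod:
  assumes "n > 0"
  shows "fm (Suc j) n = (\<Prod>p\<in>prime_factors n. fm j (multiplicity p n))"
proof -
  have "(\<Prod>p\<in>prime_factors n. fm j (multiplicity p n))
      = (\<Prod>p\<in>prime_factors n. of_bool (H (multiplicity p n) \<le> j))"
    using assms by (intro prod.cong) (auto simp: fm_def prime_factors_multiplicity)
  also have "\<dots> = of_bool (H n \<le> Suc j)"
    by (simp add: prod_of_bool H_le_Suc_iff[OF assms])
  also have "\<dots> = fm (Suc j) n"
    using assms by (simp add: fm_def)
  finally show ?thesis ..
qed

theorem lemma1:
  fixes m n :: nat
  assumes "m \<ge> 1" and "n \<ge> 1"
  shows "Fm m n = (\<Prod>p\<in>prime_factors n.
                     fm (m - 1) (multiplicity p n) - fm (m - 1) (multiplicity p n - 1))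
         \<and> \<bar>Fm m n\<bar> \<le> 1
         \<and> (Fm m n \<noteq> 0 \<longrightarrow>
              (\<forall>p. prime p \<and> p dvd n \<longrightarrow> multiplicity p n \<ge> tetr 2 m))"
proof -
  obtain j where m: "m = Suc j"
    using assms(1) by (cases m) auto
  define F :: "nat \<Rightarrow> int"
    where "F d = (\<Prod>p\<in>prime_factors d. fm j (multiplicity p d) - fm j (multiplicity p d - 1))"
    for d
  have "Fm m n = F n"
  proof (rule Fm_eqI)
    show "(\<Sum>d | d dvd k. F d) = fm m k" if "k > 0" for k
      unfolding F_def m fm_Suc_eq_prod[OF that]
      by (rule sum_divisors_prod_diff[OF that]) (simp add: fm_def)
  qed (use assms(2) in simp)
  moreover have "\<bar>F n\<bar> \<le> 1"
    unfolding F_def abs_prod by (intro prod_le_1) (auto simp: fm_def)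
  moreover have "multiplicity p n \<ge> tetr 2 m" if "F n \<noteq> 0" "prime p" "p dvd n" for p
  proof (rule ccontr)
    assume "\<not> multiplicity p n \<ge> tetr 2 m"
    then have "fm j (multiplicity p n) - fm j (multiplicity p n - 1) = 0"
      by (simp add: m fm_eq_1_if_less_tetr)
    moreover have "p \<in> prime_factors n"
      using that assms(2) by (auto simp: in_prime_factors_iff)
    ultimately have "F n = 0"
      unfolding F_def by (intro prod_zero) auto
    with that show False by simp
  qed
  ultimately show ?thesis
    by (simp add: F_def m)
qed

end
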